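(* For the problem of minimizing energy plus integral weighted flow time, $\mathrm{cost}(S,\mathcal{J})=E(S)+\sum_{j\in\mathcal{J}}v_j(c_j^S-r_j)$, with $\alpha\ge1$, the cost function is $\beta$-smooth for $\beta(\mathcal{J})=\max\big(4\max_{j\in\mathcal{J}}v_j,\;2^\alpha-1\big)$.
   Context: Jobs are tuples $(j,r_j,p_j,v_j)$ (identifier, release time, processing time, weight $v_j>0$). A feasible schedule for $\mathcal{J}$ assigns speeds $s_j(t)\ge0$ (zero before $r_j$, $\int s_j=p_j$); energy $E(S)=\int(\sum_js_j(t))^\alpha dt$; work profile $w^S_j(t)=p_j-\int_{r_j}^ts_j$; $c_j^S$ is the completion time; the quality cost is $F(S,\mathcal{J})=\sum_jv_j(c_j^S-r_j)$; $\mathtt{OPT}(\mathcal{J})$ is the minimum of $E(S)+F(S,\mathcal{J})$. A function $\beta$ from job sets to $\mathbb{R}$ is smooth if for every $\mathcal{J}$, all $r'_j\ge0$ and $\eta_j\ge0$, $\beta(\mathcal{J}')\le(1+\max_j\eta_j)\beta(\mathcal{J})$ where $\mathcal{J}'=\{(j,r'_j,p_j(1+\eta_j),v_j(1+\eta_j))\}$; it is monotone if $\beta(\mathcal{J}'')\le\beta(\mathcal{J})$ for $\mathcal{J}''\subseteq\mathcal{J}$. The cost function is $\beta$-smooth if $\beta\ge1$ is smooth and monotone and for all $\eta,\eta'\in[0,1]$, all $\mathcal{J}_1,\mathcal{J}_2$ with $|\mathcal{J}_1|=|\mathcal{J}_2|$, every bijection $\pi:\mathcal{J}_1\to\mathcal{J}_2$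 and all feasible $S_1,S_2$ for $\mathcal{J}_1,\mathcal{J}_2$: (i) if for all $j\in\mathcal{J}_1$, $|r_j-r_{\pi(j)}|\le\eta'$, $p_j\le p_{\pi(j)}(1+\eta)$ and $v_j\le v_{\pi(j)}(1+\eta)$, then $\mathtt{OPT}(\mathcal{J}_1)\le(1+\beta(\mathcal{J}_1)\eta)\mathtt{OPT}(\mathcal{J}_2)+\beta(\mathcal{J}_1)|\mathcal{J}_1|\eta'$; (ii) if for all $j\in\mathcal{J}_1$, $p_j\le p_{\pi(j)}$, $v_j\le v_{\pi(j)}$, $r_j\ge r_{\pi(j)}-\eta'$, and $w^{S_1}_j(t)\le w^{S_2}_{\pi(j)}(t-\eta')$ for all $t\ge r_{\pi(j)}+\eta'$, then $F(S_1,\mathcal{J}_1)\le F(S_2,\mathcal{J}_2)+\beta(\mathcal{J}_1)|\mathcal{J}_1|\eta'$. *)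

theory Defs
  imports "HOL-Analysis.Analysis"
begin

type_synonym 'i job = "'i \<times> real \<times> real \<times> real"

definition jid :: "'i job \<Rightarrow> 'i" where "jid x = fst x"
definition rel :: "'i job \<Rightarrow> real" where "rel x = fst (snd x)"
definition proc :: "'i job \<Rightarrow> real" where "proc x = fst (snd (snd x))"
definition wt :: "'i job \<Rightarrow> real" where "wt x = snd (snd (snd x))"

definition valid_jobs :: "'i job set \<Rightarrow> bool" where
  "valid_jobs J \<longleftrightarrow> finite J \<and> inj_on jid J \<and>
     (\<forall>x\<in>J. rel x \<ge> 0 \<and> proc x > 0 \<and> wt x > 0)"

text \<open>A schedule gives for each job its speed as a function of time.\<close>
type_synonym 'i schedule = "'i job \<Rightarrow> real \<Rightarrow> real"

definition work :: "'i schedule \<Rightarrow> 'i job \<Rightarrow> real \<Rightarrow> real" where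
  "work S x t = proc x - integral {rel x..t} (S x)"

definition compl :: "'i schedule \<Rightarrow> 'i job \<Rightarrow> real" where
  "compl S x = Inf {t. rel x \<le> t \<and> work S x t = 0}"

definition feasible :: "'i job set \<Rightarrow> 'i schedule \<Rightarrow> bool" where
  "feasible J S \<longleftrightarrow> (\<forall>x\<in>J.
      (\<forall>t. S x t \<ge> 0) \<and> (\<forall>t. t < rel x \<longrightarrow> S x t = 0) \<and>
      (S x has_integral proc x) UNIV \<and> (\<exists>t. work S x t = 0))"

definition energy :: "real \<Rightarrow> 'i job set \<Rightarrow> 'i schedule \<Rightarrow> ennreal" where
  "energy \<alpha> J S = (\<integral>\<^sup>+ t. ennreal ((\<Sum>x\<in>J. S x t) powr \<alpha>) \<partial>lebesgue)"

definition flow :: "'i job set \<Rightarrow> 'i schedule \<Rightarrow> real" where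
  "flow J S = (\<Sum>x\<in>J. wt x * (compl S x - rel x))"

definition OPT :: "real \<Rightarrow> 'i job set \<Rightarrow> ennreal" where
  "OPT \<alpha> J = (INF S\<in>{S. feasible J S}. energy \<alpha> J S + ennreal (flow J S))"

definition smooth_fn :: "('i job set \<Rightarrow> real) \<Rightarrow> bool" where
  "smooth_fn \<beta> \<longleftrightarrow> (\<forall>J r' \<eta>. valid_jobs J \<longrightarrow> (\<forall>x\<in>J. r' x \<ge> 0) \<longrightarrow> (\<forall>x\<in>J. \<eta> x \<ge> 0) \<longrightarrow>
      \<beta> ((\<lambda>x. (jid x, r' x, proc x * (1 + \<eta> x), wt x * (1 + \<eta> x))) ` J)
        \<le> (1 + Max (insert 0 (\<eta> ` J))) * \<beta> J)"

definition monotone_fn :: "('i job set \<Rightarrow> real) \<Rightarrow> bool" where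
  "monotone_fn \<beta> \<longleftrightarrow> (\<forall>J J''. valid_jobs J \<longrightarrow> J'' \<subseteq> J \<longrightarrow> \<beta> J'' \<le> \<beta> J)"

definition beta_smooth :: "real \<Rightarrow> ('i job set \<Rightarrow> real) \<Rightarrow> bool" where
  "beta_smooth \<alpha> \<beta> \<longleftrightarrow>
     (\<forall>J. valid_jobs J \<longrightarrow> \<beta> J \<ge> 1) \<and> smooth_fn \<beta> \<and> monotone_fn \<beta> \<and>
     (\<forall>\<eta> \<eta>' (J1 :: 'i job set) (J2 :: 'i job set) \<pi>. 0 \<le> \<eta> \<and> \<eta> \<le> 1 \<and> 0 \<le> \<eta>' \<and> \<eta>' \<le> 1 \<and>
        valid_jobs J1 \<and> valid_jobs J2 \<and> card J1 = card J2 \<and> bij_betw \<pi> J1 J2 \<longrightarrow>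
        ((\<forall>x\<in>J1. \<bar>rel x - rel (\<pi> x)\<bar> \<le> \<eta>' \<and> proc x \<le> proc (\<pi> x) * (1 + \<eta>)
                  \<and> wt x \<le> wt (\<pi> x) * (1 + \<eta>)) \<longrightarrow>
          OPT \<alpha> J1 \<le> ennreal (1 + \<beta> J1 * \<eta>) * OPT \<alpha> J2
                        + ennreal (\<beta> J1 * real (card J1) * \<eta>')) \<and>
        (\<forall>S1 S2. feasible J1 S1 \<and> feasible J2 S2 \<and>
           (\<forall>x\<in>J1. proc x \<le> proc (\<pi> x) \<and> wt x \<le> wt (\<pi> x) \<and> rel x \<ge> rel (\<pi> x) - \<eta>' \<and>
              (\<forall>t. t \<ge> rel (\<pi> x) + \<eta>' \<longrightarrow> work S1 x t \<le> work S2 (\<pi> x) (t - \<eta>'))) \<longrightarrow>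
           flow J1 S1 \<le> flow J2 S2 + \<beta> J1 * real (card J1) * \<eta>'))"

text \<open>max over an empty job set is taken to be 0 (all weights are positive).\<close>
definition maxwt :: "'i job set \<Rightarrow> real" where
  "maxwt J = Max (insert 0 (wt ` J))"

end

theory Submission
  imports Defs
begin

text \<open>
  The energy part of the first smoothness condition comes from simulating an optimal schedule
  for \<open>J\<^sub>2\<close> on \<open>J\<^sub>1\<close>: run each job \<open>x\<close> at the speed profile of \<open>\<pi> x\<close>, delayed by \<open>\<eta>'\<close> and
  scaled by \<open>p\<^sub>x / p\<^sub>\<pi>\<^sub>x \<le> 1 + \<eta>\<close>. Its energy is at most \<open>(1 + \<eta>)\<^sup>\<alpha>\<close> times the original one,
  and \<open>(1 + \<eta>)\<^sup>\<alpha> \<le> 1 + (2\<^sup>\<alpha> - 1) \<eta>\<close> by convexity of \<open>x\<^sup>\<alpha>\<close> on \<open>[1, 2]\<close>. For the flow time, in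
  both conditions every job of \<open>J\<^sub>1\<close> is released at most \<open>\<eta>'\<close> before and completes at most \<open>\<eta>'\<close>
  after its partner, so its flow time exceeds the partner's by at most \<open>2\<eta>'\<close>; summing with
  weights costs at most \<open>2 \<eta>' |J\<^sub>1| max\<^sub>j v\<^sub>j\<close>.
\<close>

lemma feasibleD:
  assumes "feasible J S" "x \<in> J"
  shows "\<And>t. 0 \<le> S x t" "\<And>t. t < rel x \<Longrightarrow> S x t = 0" "(S x has_integral proc x) UNIV"
    "\<exists>t. work S x t = 0"
  using assms unfolding feasible_def by auto

lemma work_before_release: "t < rel x \<Longrightarrow> work S x t = proc x"
  by (simp add: work_def)

lemma work_nonneg:
  assumes "feasible J S" "x \<in> J"
  shows "0 \<le> work S x t"
proof (cases "t < rel x")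
  case True
  then show ?thesis
    using feasibleD(3)[OF assms] by (simp add: work_before_release has_integral_nonneg feasibleD(1)[OF assms])
next
  case False
  have I: "(S x has_integral proc x) UNIV" by (rule feasibleD(3)[OF assms])
  have "integral {rel x..t} (S x) \<le> integral UNIV (S x)"
    by (rule integral_subset_le) (use I feasibleD(1)[OF assms] in \<open>auto intro: integrable_on_subinterval\<close>)
  also have "\<dots> = proc x" using I by (simp add: integral_unique)
  finally show ?thesis by (simp add: work_def)
qed

lemma finish_times_nonempty:
  assumes "feasible J S" "x \<in> J" "proc x > 0"
  shows "{t. rel x \<le> t \<and> work S x t = 0} \<noteq> {}"
proof -
  obtain t where t: "work S x t = 0" using feasibleD(4)[OF assms(1,2)] by auto
  with assms(3) have "\<not> t < rel x" by (auto simp: work_before_release)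
  with t show ?thesis by (auto simp: not_less)
qed

lemma rel_le_compl:
  assumes "feasible J S" "x \<in> J" "proc x > 0"
  shows "rel x \<le> compl S x"
  unfolding compl_def by (rule cInf_greatest[OF finish_times_nonempty[OF assms]]) auto

lemma compl_le_shift:
  assumes "{t. rel y \<le> t \<and> work S2 y t = 0} \<noteq> {}"
    and "\<And>z. rel y \<le> z \<Longrightarrow> work S2 y z = 0 \<Longrightarrow> rel x \<le> z + d \<and> work S1 x (z + d) = 0"
  shows "compl S1 x \<le> compl S2 y + d"
proof -
  have "compl S1 x - d \<le> compl S2 y"
    unfolding compl_def
  proof (rule cInf_greatest[OF assms(1)])
    fix z assume "z \<in> {t. rel y \<le> t \<and> work S2 y t = 0}"
    then have "z + d \<in> {t. rel x \<le> t \<and> work S1 x t = 0}" using assms(2) by auto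
    then have "Inf {t. rel x \<le> t \<and> work S1 x t = 0} \<le> z + d"
      by (rule cInf_lower) (auto intro: bdd_belowI[where m="rel x"])
    then show "Inf {t. rel x \<le> t \<and> work S1 x t = 0} - d \<le> z" by simp
  qed
  then show ?thesis by simp
qed

lemma maxwt_ge: "finite J \<Longrightarrow> x \<in> J \<Longrightarrow> wt x \<le> maxwt J"
  unfolding maxwt_def by (rule Max_ge) auto

lemma maxwt_nonneg: "finite J \<Longrightarrow> 0 \<le> maxwt J"
  unfolding maxwt_def by (rule Max_ge) auto

lemma maxwt_le: "finite J \<Longrightarrow> 0 \<le> B \<Longrightarrow> (\<And>x. x \<in> J \<Longrightarrow> wt x \<le> B) \<Longrightarrow> maxwt J \<le> B"
  unfolding maxwt_def by (subst Max_le_iff) auto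

lemma maxwt_mono: "finite J \<Longrightarrow> J' \<subseteq> J \<Longrightarrow> maxwt J' \<le> maxwt J"
  unfolding maxwt_def by (rule Max_mono) auto

lemma flow_nonneg:
  assumes "valid_jobs J" "feasible J S"
  shows "0 \<le> flow J S"
  unfolding flow_def
proof (rule sum_nonneg)
  fix x assume x: "x \<in> J"
  then have "proc x > 0" "wt x > 0" using assms(1) by (auto simp: valid_jobs_def)
  then show "0 \<le> wt x * (compl S x - rel x)"
    using rel_le_compl[OF assms(2) x] by simp
qed

lemma weighted_delay_le:
  fixes c1 c2 r1 r2 d w1 w2 :: real
  assumes "r1 \<le> c1" "c1 \<le> c2 + d" "r2 - d \<le> r1" "r2 \<le> c2" "0 < w1" "w1 \<le> w2"
  shows "w1 * (c1 - r1) \<le> w2 * (c2 - r2) + 2 * d * w1"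
proof -
  have "w1 * (c1 - r1) \<le> w1 * ((c2 - r2) + 2 * d)" using assms by (intro mult_left_mono) auto
  also have "\<dots> = w1 * (c2 - r2) + 2 * d * w1" by (simp add: algebra_simps)
  also have "w1 * (c2 - r2) \<le> w2 * (c2 - r2)" using assms by (intro mult_right_mono) auto
  finally show ?thesis by simp
qed

lemma flow_le_reindex:
  assumes "bij_betw \<pi> J1 J2" "finite J1" "0 \<le> d"
    and "\<And>x. x \<in> J1 \<Longrightarrow> wt x * (compl S1 x - rel x)
           \<le> c * (wt (\<pi> x) * (compl S2 (\<pi> x) - rel (\<pi> x))) + 2 * d * wt x"
  shows "flow J1 S1 \<le> c * flow J2 S2 + 2 * d * real (card J1) * maxwt J1"
proof -
  have "flow J1 S1 \<le> (\<Sum>x\<in>J1. c * (wt (\<pi> x) * (compl S2 (\<pi> x) - rel (\<pi> x))) + 2 * d * wt x)"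
    unfolding flow_def by (rule sum_mono) (rule assms(4))
  also have "\<dots> = c * (\<Sum>x\<in>J1. wt (\<pi> x) * (compl S2 (\<pi> x) - rel (\<pi> x))) + 2 * d * (\<Sum>x\<in>J1. wt x)"
    by (simp add: sum.distrib sum_distrib_left)
  also have "(\<Sum>x\<in>J1. wt (\<pi> x) * (compl S2 (\<pi> x) - rel (\<pi> x))) = flow J2 S2"
    unfolding flow_def by (rule sum.reindex_bij_betw[OF assms(1)])
  also have "(\<Sum>x\<in>J1. wt x) \<le> real (card J1) * maxwt J1"
    by (rule sum_bounded_above) (rule maxwt_ge[OF assms(2)])
  finally show ?thesis using assms(3) by (simp add: mult_left_mono mult.assoc)
qed

lemma compl_le_of_work_le_delayed:
  assumes "feasible J1 S1" "x \<in> J1" "0 < proc x" "feasible J2 S2" "y \<in> J2" "0 < proc y"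
    and "\<forall>t. t \<ge> rel y + d \<longrightarrow> work S1 x t \<le> work S2 y (t - d)"
  shows "compl S1 x \<le> compl S2 y + d"
proof (rule compl_le_shift[OF finish_times_nonempty[OF assms(4-6)]])
  fix z assume z: "rel y \<le> z" "work S2 y z = 0"
  from assms(7)[rule_format, of "z + d"] have "work S1 x (z + d) \<le> work S2 y z"
    using z(1) by simp
  then have "work S1 x (z + d) = 0"
    using z(2) work_nonneg[OF assms(1,2), of "z + d"] by simp
  moreover have "rel x \<le> z + d"
    using calculation assms(3) by (metis not_le less_irrefl work_before_release)
  ultimately show "rel x \<le> z + d \<and> work S1 x (z + d) = 0" by simp
qed

lemma flow_le_of_work_le_delayed:
  assumes "valid_jobs J1" "valid_jobs J2" "bij_betw \<pi> J1 J2"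
    and "feasible J1 S1" "feasible J2 S2" "0 \<le> d"
    and "\<forall>x\<in>J1. wt x \<le> wt (\<pi> x) \<and> rel x \<ge> rel (\<pi> x) - d \<and>
           (\<forall>t. t \<ge> rel (\<pi> x) + d \<longrightarrow> work S1 x t \<le> work S2 (\<pi> x) (t - d))"
  shows "flow J1 S1 \<le> flow J2 S2 + 2 * d * real (card J1) * maxwt J1"
proof -
  have "flow J1 S1 \<le> 1 * flow J2 S2 + 2 * d * real (card J1) * maxwt J1"
  proof (rule flow_le_reindex[OF assms(3) _ assms(6)])
    show "finite J1" using assms(1) by (simp add: valid_jobs_def)
  next
    fix x assume x: "x \<in> J1"
    have y: "\<pi> x \<in> J2" using assms(3) x by (auto simp: bij_betw_def)
    have px: "proc x > 0" "wt x > 0" using assms(1) x by (auto simp: valid_jobs_def)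
    have py: "proc (\<pi> x) > 0" using assms(2) y by (auto simp: valid_jobs_def)
    have "compl S1 x \<le> compl S2 (\<pi> x) + d"
      using assms(7) x by (intro compl_le_of_work_le_delayed[OF assms(4) x px(1) assms(5) y py]) blast
    then show "wt x * (compl S1 x - rel x) \<le> 1 * (wt (\<pi> x) * (compl S2 (\<pi> x) - rel (\<pi> x))) + 2 * d * wt x"
      using weighted_delay_le rel_le_compl[OF assms(4) x px(1)] rel_le_compl[OF assms(5) y py]
        assms(7) x px(2) by simp
  qed
  then show ?thesis by simp
qed

subsection \<open>Delayed and rescaled schedules\<close>

definition delayed_schedule :: "('i job \<Rightarrow> 'j job) \<Rightarrow> real \<Rightarrow> 'j schedule \<Rightarrow> 'i schedule" where
  "delayed_schedule \<pi> d S x t = proc x / proc (\<pi> x) * S (\<pi> x) (t - d)"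

lemma nn_integral_lebesgue_shift:
  fixes f :: "real \<Rightarrow> ennreal"
  assumes "f \<in> borel_measurable lebesgue"
  shows "(\<integral>\<^sup>+t. f (t - d) \<partial>lebesgue) = (\<integral>\<^sup>+t. f t \<partial>lebesgue)"
  using nn_integral_real_affine_lebesgue[OF assms, where c=1 and t="-d"] by simp

lemma measurable_lebesgue_shift:
  fixes f :: "real \<Rightarrow> 'b::topological_space"
  assumes "f \<in> borel_measurable lebesgue"
  shows "(\<lambda>t. f (t - d)) \<in> borel_measurable lebesgue"
proof -
  have "(\<lambda>x::real. -d + x) \<in> lebesgue \<rightarrow>\<^sub>M lebesgue"
    using lebesgue_affine_measurable[where c="\<lambda>x::real. 1" and t="-d"] by simp
  from measurable_compose[OF this assms] show ?thesis by (simp add: comp_def)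
qed

lemma has_integral_scaled_shift:
  fixes f :: "real \<Rightarrow> real"
  assumes "\<And>t. 0 \<le> f t" "(f has_integral I) UNIV" "0 \<le> k"
  shows "((\<lambda>t. k * f (t - d)) has_integral (k * I)) UNIV"
proof -
  have m: "f \<in> borel_measurable lebesgue" and N: "(\<integral>\<^sup>+t. ennreal (f t) \<partial>lebesgue) = ennreal I"
    and I: "0 \<le> I"
    using has_integral_iff_nn_integral_lebesgue[of f, OF assms(1)] assms(2) by auto
  have ms: "(\<lambda>t. f (t - d)) \<in> borel_measurable lebesgue" by (rule measurable_lebesgue_shift[OF m])
  have "(\<integral>\<^sup>+t. ennreal (k * f (t - d)) \<partial>lebesgue) = (\<integral>\<^sup>+t. ennreal k * ennreal (f (t - d)) \<partial>lebesgue)"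
    using assms(1,3) by (simp add: ennreal_mult)
  also have "\<dots> = ennreal k * (\<integral>\<^sup>+t. ennreal (f (t - d)) \<partial>lebesgue)"
    by (rule nn_integral_cmult) (use ms in measurable)
  also have "(\<integral>\<^sup>+t. ennreal (f (t - d)) \<partial>lebesgue) = (\<integral>\<^sup>+t. ennreal (f t) \<partial>lebesgue)"
    by (rule nn_integral_lebesgue_shift[where f="\<lambda>t. ennreal (f t)"]) (use m in measurable)
  finally have "(\<integral>\<^sup>+t. ennreal (k * f (t - d)) \<partial>lebesgue) = ennreal (k * I)"
    using N assms(3) I by (simp add: ennreal_mult)
  moreover have "(\<lambda>t. k * f (t - d)) \<in> borel_measurable lebesgue" using ms by measurable
  ultimately show ?thesis
    using has_integral_iff_nn_integral_lebesgue[of "\<lambda>t. k * f (t - d)"] assms(1,3) I by auto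
qed

lemma work_delayed_schedule:
  assumes "feasible J2 S2" "\<pi> x \<in> J2" "proc (\<pi> x) > 0" "0 \<le> proc x" "rel x \<le> rel (\<pi> x) + d"
  shows "work (delayed_schedule \<pi> d S2) x t = proc x / proc (\<pi> x) * work S2 (\<pi> x) (t - d)"
proof -
  define k where "k = proc x / proc (\<pi> x)"
  define y where "y = \<pi> x"
  have k: "0 \<le> k" "k * proc y = proc x" using assms(3,4) by (simp_all add: k_def y_def)
  have S1: "delayed_schedule \<pi> d S2 x = (\<lambda>t. k * S2 y (t - d))"
    by (simp add: fun_eq_iff delayed_schedule_def k_def y_def)
  note fy = feasibleD[OF assms(1) assms(2)[folded y_def]]
  have "work (delayed_schedule \<pi> d S2) x t = k * work S2 y (t - d)"
  proof (cases "t < rel y + d")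
    case True
    have "integral {rel x..t} (delayed_schedule \<pi> d S2 x) = integral {rel x..t} (\<lambda>_. 0::real)"
      by (rule integral_cong) (use True fy(2) S1 in auto)
    moreover have "work S2 y (t - d) = proc y" using True by (intro work_before_release) simp
    ultimately show "work (delayed_schedule \<pi> d S2) x t = k * work S2 y (t - d)"
      using k by (simp add: work_def)
  next
    case False
    let ?r = "rel y + d" and ?S1 = "delayed_schedule \<pi> d S2 x"
    have int: "?S1 integrable_on {rel x..t}"
      using has_integral_scaled_shift[OF fy(1) fy(3) k(1), of d] S1
      by (auto intro: integrable_on_subinterval)
    have "integral {rel x..t} ?S1 = integral {rel x..?r} ?S1 + integral {?r..t} ?S1"
      by (rule Henstock_Kurzweil_Integration.integral_combine[symmetric]) (use assms(5) False int y_def in auto)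
    moreover have "integral {rel x..?r} ?S1 = integral {rel x..?r} (\<lambda>_. 0::real)"
      by (rule integral_spike[of "{?r}"]) (use fy(2) S1 in auto)
    moreover have "integral {?r..t} ?S1 = k * integral {?r..t} (S2 y \<circ> (+) (-d))"
      using S1 by (simp add: comp_def integral_mult_right)
    moreover have "integral {?r..t} (S2 y \<circ> (+) (-d)) = integral {rel y..t - d} (S2 y)"
      by (subst integral_shift_Icc_real) simp
    ultimately have "integral {rel x..t} ?S1 = k * integral {rel y..t - d} (S2 y)" by simp
    then show "work (delayed_schedule \<pi> d S2) x t = k * work S2 y (t - d)"
      using k by (simp add: work_def algebra_simps)
  qed
  then show ?thesis by (simp add: k_def y_def)
qed

locale delay_setting =
  fixes J1 :: "'i job set" and J2 :: "'j job set" and \<pi> :: "'i job \<Rightarrow> 'j job"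
    and S2 :: "'j schedule" and d :: real
  assumes valid1: "valid_jobs J1" and valid2: "valid_jobs J2" and bij: "bij_betw \<pi> J1 J2"
    and feasible2: "feasible J2 S2" and close: "\<And>x. x \<in> J1 \<Longrightarrow> \<bar>rel x - rel (\<pi> x)\<bar> \<le> d"
begin

lemma partner_mem: "x \<in> J1 \<Longrightarrow> \<pi> x \<in> J2"
  using bij by (auto simp: bij_betw_def)

lemma proc_pos: "x \<in> J1 \<Longrightarrow> 0 < proc x"
  using valid1 by (auto simp: valid_jobs_def)

lemma proc_partner_pos: "x \<in> J1 \<Longrightarrow> 0 < proc (\<pi> x)"
  using valid2 partner_mem by (auto simp: valid_jobs_def)

lemma work_delayed:
  assumes "x \<in> J1"
  shows "work (delayed_schedule \<pi> d S2) x t = proc x / proc (\<pi> x) * work S2 (\<pi> x) (t - d)"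
  using close[OF assms] proc_pos[OF assms]
  by (intro work_delayed_schedule[where \<pi>=\<pi> and x=x, OF feasible2 partner_mem[OF assms] proc_partner_pos[OF assms]])
    auto

lemma delayed_finishes:
  assumes "x \<in> J1" "rel (\<pi> x) \<le> z" "work S2 (\<pi> x) z = 0"
  shows "rel x \<le> z + d \<and> work (delayed_schedule \<pi> d S2) x (z + d) = 0"
  using work_delayed[OF assms(1), of "z + d"] close[OF assms(1)] assms(2,3) by simp

lemma feasible_delayed: "feasible J1 (delayed_schedule \<pi> d S2)"
  unfolding feasible_def
proof (intro ballI conjI allI impI)
  fix x t assume x: "x \<in> J1"
  note f2 = feasibleD[OF feasible2 partner_mem[OF x]]
  have k: "0 \<le> proc x / proc (\<pi> x)" using proc_pos[OF x] proc_partner_pos[OF x] by simp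
  show "0 \<le> delayed_schedule \<pi> d S2 x t"
    unfolding delayed_schedule_def using k f2(1) by (rule mult_nonneg_nonneg)
  show "t < rel x \<Longrightarrow> delayed_schedule \<pi> d S2 x t = 0"
    unfolding delayed_schedule_def using f2(2)[of "t - d"] close[OF x] by simp
  show "(delayed_schedule \<pi> d S2 x has_integral proc x) UNIV"
    using has_integral_scaled_shift[OF f2(1) f2(3) k, of d] proc_partner_pos[OF x]
    by (simp add: delayed_schedule_def[abs_def])
  obtain z where "rel (\<pi> x) \<le> z" "work S2 (\<pi> x) z = 0"
    using finish_times_nonempty[OF feasible2 partner_mem[OF x] proc_partner_pos[OF x]] by auto
  then show "\<exists>t. work (delayed_schedule \<pi> d S2) x t = 0"
    using delayed_finishes[OF x] by blast
qed

lemma flow_delayed_le: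
  assumes "0 \<le> d" "\<And>x. x \<in> J1 \<Longrightarrow> wt x \<le> wt (\<pi> x) * c"
  shows "flow J1 (delayed_schedule \<pi> d S2) \<le> c * flow J2 S2 + 2 * d * real (card J1) * maxwt J1"
proof (rule flow_le_reindex[OF bij _ assms(1)])
  show "finite J1" using valid1 by (simp add: valid_jobs_def)
next
  fix x assume x: "x \<in> J1"
  have "compl (delayed_schedule \<pi> d S2) x \<le> compl S2 (\<pi> x) + d"
    by (rule compl_le_shift[OF finish_times_nonempty[OF feasible2 partner_mem[OF x] proc_partner_pos[OF x]]])
      (rule delayed_finishes[OF x])
  moreover have "wt x > 0" using valid1 x by (auto simp: valid_jobs_def)
  ultimately have "wt x * (compl (delayed_schedule \<pi> d S2) x - rel x)
      \<le> (wt (\<pi> x) * c) * (compl S2 (\<pi> x) - rel (\<pi> x)) + 2 * d * wt x"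
    using close[OF x] assms(2)[OF x] rel_le_compl[OF feasible_delayed x proc_pos[OF x]]
      rel_le_compl[OF feasible2 partner_mem[OF x] proc_partner_pos[OF x]]
    by (intro weighted_delay_le) auto
  then show "wt x * (compl (delayed_schedule \<pi> d S2) x - rel x)
      \<le> c * (wt (\<pi> x) * (compl S2 (\<pi> x) - rel (\<pi> x))) + 2 * d * wt x"
    by (simp add: algebra_simps)
qed

lemma energy_delayed_le:
  assumes "1 \<le> \<alpha>" "0 \<le> c" "\<And>x. x \<in> J1 \<Longrightarrow> proc x \<le> proc (\<pi> x) * c"
  shows "energy \<alpha> J1 (delayed_schedule \<pi> d S2) \<le> ennreal (c powr \<alpha>) * energy \<alpha> J2 S2"
proof -
  have nn2: "\<And>y t. y \<in> J2 \<Longrightarrow> 0 \<le> S2 y t" using feasibleD(1)[OF feasible2] by blast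
  define g where "g = (\<lambda>s. (\<Sum>y\<in>J2. S2 y s) powr \<alpha>)"
  have gm: "g \<in> borel_measurable lebesgue"
  proof -
    have "S2 y \<in> borel_measurable lebesgue" if "y \<in> J2" for y
      using feasibleD(3)[OF feasible2 that] has_integral_iff_nn_integral_lebesgue[of "S2 y"] nn2[OF that]
      by auto
    then have "(\<lambda>s. \<Sum>y\<in>J2. S2 y s) \<in> borel_measurable lebesgue" by (rule borel_measurable_sum)
    then show ?thesis unfolding g_def by measurable
  qed
  have pointwise: "(\<Sum>x\<in>J1. delayed_schedule \<pi> d S2 x t) powr \<alpha> \<le> c powr \<alpha> * g (t - d)" for t
  proof -
    have "(\<Sum>x\<in>J1. delayed_schedule \<pi> d S2 x t) \<le> (\<Sum>x\<in>J1. c * S2 (\<pi> x) (t - d))"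
    proof (rule sum_mono)
      fix x assume x: "x \<in> J1"
      have "proc x / proc (\<pi> x) \<le> c"
        using assms(3)[OF x] proc_partner_pos[OF x] by (simp add: divide_le_eq mult.commute)
      then show "delayed_schedule \<pi> d S2 x t \<le> c * S2 (\<pi> x) (t - d)"
        unfolding delayed_schedule_def by (rule mult_right_mono[OF _ nn2[OF partner_mem[OF x]]])
    qed
    also have "\<dots> = c * (\<Sum>y\<in>J2. S2 y (t - d))"
      by (simp add: sum_distrib_left[symmetric] sum.reindex_bij_betw[OF bij, of "\<lambda>y. S2 y (t - d)"])
    finally have le: "(\<Sum>x\<in>J1. delayed_schedule \<pi> d S2 x t) \<le> c * (\<Sum>y\<in>J2. S2 y (t - d))" .
    have "0 \<le> (\<Sum>x\<in>J1. delayed_schedule \<pi> d S2 x t)"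
      using feasibleD(1)[OF feasible_delayed] by (simp add: sum_nonneg)
    then have "(\<Sum>x\<in>J1. delayed_schedule \<pi> d S2 x t) powr \<alpha> \<le> (c * (\<Sum>y\<in>J2. S2 y (t - d))) powr \<alpha>"
      using assms(1) le by (intro powr_mono2) auto
    also have "\<dots> = c powr \<alpha> * g (t - d)"
      unfolding g_def using assms(2) nn2 by (auto intro!: powr_mult sum_nonneg)
    finally show ?thesis .
  qed
  have "energy \<alpha> J1 (delayed_schedule \<pi> d S2) \<le> (\<integral>\<^sup>+t. ennreal (c powr \<alpha> * g (t - d)) \<partial>lebesgue)"
    unfolding energy_def by (rule nn_integral_mono) (use pointwise in \<open>auto intro: ennreal_leI\<close>)
  also have "\<dots> = (\<integral>\<^sup>+t. ennreal (c powr \<alpha> * g t) \<partial>lebesgue)"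
    by (rule nn_integral_lebesgue_shift[where f="\<lambda>t. ennreal (c powr \<alpha> * g t)"]) (use gm in measurable)
  also have "\<dots> = (\<integral>\<^sup>+t. ennreal (c powr \<alpha>) * ennreal (g t) \<partial>lebesgue)"
    by (simp add: ennreal_mult g_def)
  also have "\<dots> = ennreal (c powr \<alpha>) * (\<integral>\<^sup>+t. ennreal (g t) \<partial>lebesgue)"
    by (rule nn_integral_cmult) (use gm in measurable)
  also have "(\<integral>\<^sup>+t. ennreal (g t) \<partial>lebesgue) = energy \<alpha> J2 S2"
    by (simp add: energy_def g_def)
  finally show ?thesis .
qed

end

subsection \<open>The optimum under perturbation of the jobs\<close>

lemma one_plus_powr_le:
  fixes \<alpha> \<eta> :: real
  assumes "1 \<le> \<alpha>" "0 \<le> \<eta>" "\<eta> \<le> 1"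
  shows "(1 + \<eta>) powr \<alpha> \<le> 1 + (2 powr \<alpha> - 1) * \<eta>"
proof -
  have "(\<lambda>x::real. x powr \<alpha>) ((1 - \<eta>) *\<^sub>R 1 + \<eta> *\<^sub>R 2) \<le> (1 - \<eta>) * 1 powr \<alpha> + \<eta> * 2 powr \<alpha>"
    by (rule convex_onD[OF powr_convex[OF assms(1)]]) (use assms in auto)
  then show ?thesis by (simp add: algebra_simps)
qed

lemma OPT_le_of_cost_bound:
  fixes c B :: real
  assumes "1 \<le> c" "0 \<le> B"
    and "\<And>S2. feasible J2 S2 \<Longrightarrow> OPT \<alpha> J1 \<le> ennreal c * (energy \<alpha> J2 S2 + ennreal (flow J2 S2)) + ennreal B"
  shows "OPT \<alpha> J1 \<le> ennreal c * OPT \<alpha> J2 + ennreal B"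
proof (rule ennreal_le_epsilon)
  fix e :: real assume lt: "ennreal c * OPT \<alpha> J2 + ennreal B < top" and e: "0 < e"
  have "OPT \<alpha> J2 \<noteq> \<infinity>"
    using lt assms(1) by (auto simp: ennreal_mult_top)
  moreover have "0 < e / c" using e assms(1) by simp
  ultimately obtain S2 where S2: "feasible J2 S2"
    and near: "energy \<alpha> J2 S2 + ennreal (flow J2 S2) < OPT \<alpha> J2 + ennreal (e / c)"
    using INF_approx_ennreal[where e="e / c" and A="{S. feasible J2 S}"
        and f="\<lambda>S. energy \<alpha> J2 S + ennreal (flow J2 S)"]
    unfolding OPT_def by blast
  have "OPT \<alpha> J1 \<le> ennreal c * (energy \<alpha> J2 S2 + ennreal (flow J2 S2)) + ennreal B"
    by (rule assms(3)[OF S2])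
  also have "\<dots> \<le> ennreal c * (OPT \<alpha> J2 + ennreal (e / c)) + ennreal B"
    using near by (intro add_right_mono mult_left_mono) auto
  also have "\<dots> = ennreal c * OPT \<alpha> J2 + ennreal B + ennreal e"
    using assms(1) e by (simp add: distrib_left algebra_simps ennreal_mult[symmetric])
  finally show "OPT \<alpha> J1 \<le> ennreal c * OPT \<alpha> J2 + ennreal B + ennreal e" .
qed

lemma two_le_two_powr: "1 \<le> \<alpha> \<Longrightarrow> 2 \<le> (2::real) powr \<alpha>"
  using powr_mono[of 1 \<alpha> "2::real"] by simp

lemma delay_penalty_le:
  assumes "2 * maxwt J \<le> b" "0 \<le> d"
  shows "2 * d * real (card J) * maxwt J \<le> b * real (card J) * d"
proof -
  have "(2 * maxwt J) * (real (card J) * d) \<le> b * (real (card J) * d)"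
    using assms by (intro mult_right_mono) auto
  then show ?thesis by (simp add: algebra_simps)
qed

lemma OPT_le_of_perturbed_jobs:
  assumes "1 \<le> \<alpha>" "0 \<le> \<eta>" "\<eta> \<le> 1" "0 \<le> \<eta>'"
    and "valid_jobs J1" "valid_jobs J2" "bij_betw \<pi> J1 J2"
    and perturbed: "\<forall>x\<in>J1. \<bar>rel x - rel (\<pi> x)\<bar> \<le> \<eta>' \<and> proc x \<le> proc (\<pi> x) * (1 + \<eta>)
                     \<and> wt x \<le> wt (\<pi> x) * (1 + \<eta>)"
    and b: "2 powr \<alpha> - 1 \<le> b" "2 * maxwt J1 \<le> b"
  shows "OPT \<alpha> J1 \<le> ennreal (1 + b * \<eta>) * OPT \<alpha> J2 + ennreal (b * real (card J1) * \<eta>')"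
proof (rule OPT_le_of_cost_bound)
  let ?c = "1 + b * \<eta>" and ?B = "b * real (card J1) * \<eta>'"
  have "1 \<le> b" using two_le_two_powr[OF assms(1)] b(1) by simp
  then have "\<eta> \<le> b * \<eta>" using assms(2) by (simp add: mult_le_cancel_right1)
  then have "1 + \<eta> \<le> ?c" by simp
  then show c: "1 \<le> ?c" using assms(2) by simp
  show B: "0 \<le> ?B" using \<open>1 \<le> b\<close> assms(4) by simp
  fix S2 assume S2: "feasible J2 S2"
  interpret delay_setting J1 J2 \<pi> S2 \<eta>'
    using assms(5-7) S2 perturbed by unfold_locales auto
  let ?S1 = "delayed_schedule \<pi> \<eta>' S2"
  have "energy \<alpha> J1 ?S1 \<le> ennreal ((1 + \<eta>) powr \<alpha>) * energy \<alpha> J2 S2"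
    using perturbed assms(1,2) by (intro energy_delayed_le) auto
  also have "\<dots> \<le> ennreal ?c * energy \<alpha> J2 S2"
  proof (intro mult_right_mono ennreal_leI)
    have "(2 powr \<alpha> - 1) * \<eta> \<le> b * \<eta>" using b(1) assms(2) by (rule mult_right_mono)
    then show "(1 + \<eta>) powr \<alpha> \<le> ?c" using one_plus_powr_le[OF assms(1-3)] by linarith
  qed simp
  finally have energy: "energy \<alpha> J1 ?S1 \<le> ennreal ?c * energy \<alpha> J2 S2" .
  have F2: "0 \<le> flow J2 S2" by (rule flow_nonneg[OF assms(6) S2])
  have "flow J1 ?S1 \<le> (1 + \<eta>) * flow J2 S2 + 2 * \<eta>' * real (card J1) * maxwt J1"
    using perturbed assms(4) by (intro flow_delayed_le) auto
  also have "\<dots> \<le> ?c * flow J2 S2 + ?B"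
    using \<open>1 + \<eta> \<le> ?c\<close> F2 delay_penalty_le[OF b(2) assms(4)] by (intro add_mono[OF mult_right_mono])
  finally have flow: "flow J1 ?S1 \<le> ?c * flow J2 S2 + ?B" .
  have "OPT \<alpha> J1 \<le> energy \<alpha> J1 ?S1 + ennreal (flow J1 ?S1)"
    unfolding OPT_def using feasible_delayed by (intro INF_lower) simp
  also have "\<dots> \<le> ennreal ?c * energy \<alpha> J2 S2 + ennreal (?c * flow J2 S2 + ?B)"
    using energy flow by (intro add_mono ennreal_leI)
  also have "\<dots> = ennreal ?c * (energy \<alpha> J2 S2 + ennreal (flow J2 S2)) + ennreal ?B"
    using c B F2 by (simp add: ennreal_plus ennreal_mult distrib_left add.assoc)
  finally show "OPT \<alpha> J1 \<le> ennreal ?c * (energy \<alpha> J2 S2 + ennreal (flow J2 S2)) + ennreal ?B" .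
qed

lemma smooth_fn_flow_beta:
  assumes "1 \<le> \<alpha>"
  shows "smooth_fn (\<lambda>J :: 'i job set. max (4 * maxwt J) (2 powr \<alpha> - 1))"
  unfolding smooth_fn_def
proof (intro allI impI)
  fix J :: "'i job set" and r' \<eta> :: "'i job \<Rightarrow> real"
  assume valid: "valid_jobs J" and "\<forall>x\<in>J. 0 \<le> r' x" and \<eta>: "\<forall>x\<in>J. 0 \<le> \<eta> x"
  let ?J' = "(\<lambda>x. (jid x, r' x, proc x * (1 + \<eta> x), wt x * (1 + \<eta> x))) ` J"
  let ?M = "Max (insert 0 (\<eta> ` J))"
  have fin: "finite J" using valid by (simp add: valid_jobs_def)
  have M: "0 \<le> ?M" "\<And>x. x \<in> J \<Longrightarrow> \<eta> x \<le> ?M" using fin by (auto intro: Max_ge)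
  have "maxwt ?J' \<le> (1 + ?M) * maxwt J"
  proof (rule maxwt_le)
    show "0 \<le> (1 + ?M) * maxwt J" using M(1) maxwt_nonneg[OF fin] by simp
    fix y assume "y \<in> ?J'"
    then obtain x where x: "x \<in> J" and y: "wt y = wt x * (1 + \<eta> x)" by (auto simp: wt_def)
    have "0 < wt x" using valid x by (auto simp: valid_jobs_def)
    then show "wt y \<le> (1 + ?M) * maxwt J"
      unfolding y using maxwt_ge[OF fin x] \<eta> x M(2)[OF x] by (subst mult.commute) (intro mult_mono, auto)
  qed (use fin in simp)
  then have "max (4 * maxwt ?J') (2 powr \<alpha> - 1) \<le> max ((1 + ?M) * (4 * maxwt J)) ((1 + ?M) * (2 powr \<alpha> - 1))"
    using two_le_two_powr[OF assms] M(1) by (intro max.mono) simp_all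
  also have "\<dots> = (1 + ?M) * max (4 * maxwt J) (2 powr \<alpha> - 1)"
    using M(1) by (simp add: max_mult_distrib_left)
  finally show "max (4 * maxwt ?J') (2 powr \<alpha> - 1) \<le> (1 + ?M) * max (4 * maxwt J) (2 powr \<alpha> - 1)" .
qed

lemma monotone_fn_flow_beta: "monotone_fn (\<lambda>J :: 'i job set. max (4 * maxwt J) (2 powr \<alpha> - 1))"
  unfolding monotone_fn_def valid_jobs_def by (metis max.mono maxwt_mono mult_left_mono order_refl zero_le_numeral)

theorem lemma6:
  fixes \<alpha> :: real
  assumes "\<alpha> \<ge> 1"
  shows "beta_smooth \<alpha> (\<lambda>J :: 'i job set. max (4 * maxwt J) (2 powr \<alpha> - 1))"
  unfolding beta_smooth_def
proof (intro conjI allI impI smooth_fn_flow_beta[OF assms] monotone_fn_flow_beta)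
  show "1 \<le> max (4 * maxwt J) (2 powr \<alpha> - 1)" for J :: "'i job set"
    using two_le_two_powr[OF assms] by simp
next
  fix \<eta> \<eta>' :: real and J1 J2 :: "'i job set" and \<pi>
  assume h: "0 \<le> \<eta> \<and> \<eta> \<le> 1 \<and> 0 \<le> \<eta>' \<and> \<eta>' \<le> 1 \<and> valid_jobs J1 \<and> valid_jobs J2 \<and>
    card J1 = card J2 \<and> bij_betw \<pi> J1 J2"
  have b: "2 * maxwt J1 \<le> max (4 * maxwt J1) (2 powr \<alpha> - 1)"
    using maxwt_nonneg[of J1] h by (simp add: valid_jobs_def le_max_iff_disj)
  show "OPT \<alpha> J1 \<le> ennreal (1 + max (4 * maxwt J1) (2 powr \<alpha> - 1) * \<eta>) * OPT \<alpha> J2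
      + ennreal (max (4 * maxwt J1) (2 powr \<alpha> - 1) * real (card J1) * \<eta>')"
    if "\<forall>x\<in>J1. \<bar>rel x - rel (\<pi> x)\<bar> \<le> \<eta>' \<and> proc x \<le> proc (\<pi> x) * (1 + \<eta>) \<and> wt x \<le> wt (\<pi> x) * (1 + \<eta>)"
    using OPT_le_of_perturbed_jobs[OF assms _ _ _ _ _ _ that _ b] h by simp
  show "flow J1 S1 \<le> flow J2 S2 + max (4 * maxwt J1) (2 powr \<alpha> - 1) * real (card J1) * \<eta>'"
    if "feasible J1 S1 \<and> feasible J2 S2 \<and> (\<forall>x\<in>J1. proc x \<le> proc (\<pi> x) \<and> wt x \<le> wt (\<pi> x) \<and>
      rel (\<pi> x) - \<eta>' \<le> rel x \<and> (\<forall>t. rel (\<pi> x) + \<eta>' \<le> t \<longrightarrow> work S1 x t \<le> work S2 (\<pi> x) (t - \<eta>')))"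
    for S1 S2
    using flow_le_of_work_le_delayed[of J1 J2 \<pi> S1 S2 \<eta>'] delay_penalty_le[OF b, of \<eta>'] h that by auto
qed

end
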